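(* Let $\mathfrak n$ be a 2-step nilpotent real Lie algebra with inner product $\langle\cdot,\cdot\rangle$, center $\mathfrak z$, $\mathfrak v=\mathfrak z^\perp$, commutator $C(\mathfrak n)=[\mathfrak n,\mathfrak n]$, and maps $j_Z$ as in the context. Let $F:\mathfrak n\to\mathfrak n$ be linear and write $F=F_1+F_2$ uniquely with $F_1(\mathfrak v)\subseteq\mathfrak v$, $F_1(\mathfrak z)\subseteq\mathfrak z$, $F_2(\mathfrak v)\subseteq\mathfrak z$, $F_2(\mathfrak z)\subseteq\mathfrak v$. Then: (i) a skew-symmetric $F$ gives rise to a closed 2-form $\omega(X,Y)=\langle F(X),Y\rangle$ if and only if $F_1$ and $F_2$ are skew-symmetric, $F_1(Z)$ is orthogonal to $C(\mathfrak n)$ for all $Z\in\mathfrak z$, and $\langle F_2(U),[V,W]\rangle+\langle F_2(V),[W,U]\rangle+\langle F_2(W),[U,V]\rangle=0$ for all $U,V,W\in\mathfrak v$; (ii) exact left-invariant 2-forms on $\mathfrak n$ (i.e. $d\eta$ for $\eta\in\mathfrak n^*$) are in one-to-one correspondence with the skew-symmetric maps $j_{\tilde Z}$ with $\tilde Z\in C(\mathfrak n)$ (the exact 2-form $d\ell_{\tilde Z}$, $\ell_{\tilde Z}=\langle\tilde Z,\cdot\rangle$, having Lorentz force $j_{\tilde Z}$ on $\mathfrak v$, extended by zero on $\mathfrak z$).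
   Context: A real Lie algebra is 2-step nilpotent if $[[U,V],W]=0$ for all $U,V,W$. For $Z\in\mathfrak z$, $j_Z:\mathfrak v\to\mathfrak v$ is defined by $\langle j_ZV,W\rangle=\langle Z,[V,W]\rangle$ for $V,W\in\mathfrak v$. For a left-invariant 1-form $\eta$, $d\eta(U,V)=-\eta([U,V])$ up to the sign convention; here $d\ell_{\tilde Z}(U,V)=\langle\tilde Z,[U,V]\rangle$. A 2-form $\omega$ on $\mathfrak n$ is closed iff $\omega([U,V],W)+\omega([V,W],U)+\omega([W,U],V)=0$ for all $U,V,W\in\mathfrak n$. *)

theory Defs
  imports "HOL-Analysis.Analysis"
begin

definition lie_algebra :: "('a::euclidean_space \<Rightarrow> 'a \<Rightarrow> 'a) \<Rightarrow> bool" where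
  "lie_algebra br \<longleftrightarrow> bilinear br \<and> (\<forall>X. br X X = 0) \<and>
     (\<forall>X Y Z. br X (br Y Z) + br Y (br Z X) + br Z (br X Y) = 0)"

definition two_step_nilpotent :: "('a::euclidean_space \<Rightarrow> 'a \<Rightarrow> 'a) \<Rightarrow> bool" where
  "two_step_nilpotent br \<longleftrightarrow> lie_algebra br \<and> (\<forall>U V W. br (br U V) W = 0)"

definition center :: "('a::euclidean_space \<Rightarrow> 'a \<Rightarrow> 'a) \<Rightarrow> 'a set" where
  "center br = {Z. \<forall>X. br Z X = 0}"

definition vpart :: "('a::euclidean_space \<Rightarrow> 'a \<Rightarrow> 'a) \<Rightarrow> 'a set" where
  "vpart br = {V. \<forall>Z\<in>center br. V \<bullet> Z = 0}"

definition commutator :: "('a::euclidean_space \<Rightarrow> 'a \<Rightarrow> 'a) \<Rightarrow> 'a set" where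
  "commutator br = span {br U V | U V. True}"

definition jmap :: "('a::euclidean_space \<Rightarrow> 'a \<Rightarrow> 'a) \<Rightarrow> 'a \<Rightarrow> 'a \<Rightarrow> 'a" where
  "jmap br Z V = (THE u. u \<in> vpart br \<and> (\<forall>W\<in>vpart br. u \<bullet> W = Z \<bullet> br V W))"

definition projv :: "('a::euclidean_space \<Rightarrow> 'a \<Rightarrow> 'a) \<Rightarrow> 'a \<Rightarrow> 'a" where
  "projv br X = (THE V. V \<in> vpart br \<and> X - V \<in> center br)"

definition jext :: "('a::euclidean_space \<Rightarrow> 'a \<Rightarrow> 'a) \<Rightarrow> 'a \<Rightarrow> 'a \<Rightarrow> 'a" where
  "jext br Z X = jmap br Z (projv br X)"

definition skew_symmetric :: "('a::real_inner \<Rightarrow> 'a) \<Rightarrow> bool" where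
  "skew_symmetric F \<longleftrightarrow> (\<forall>X Y. F X \<bullet> Y = - (X \<bullet> F Y))"

text \<open>closedness of a (left-invariant) 2-form on n\<close>
definition closed_form :: "('a::euclidean_space \<Rightarrow> 'a \<Rightarrow> 'a) \<Rightarrow> ('a \<Rightarrow> 'a \<Rightarrow> real) \<Rightarrow> bool" where
  "closed_form br \<omega> \<longleftrightarrow>
     (\<forall>U V W. \<omega> (br U V) W + \<omega> (br V W) U + \<omega> (br W U) V = 0)"

text \<open>d eta (U,V) = eta([U,V]) (sign convention as for d l_Z below)\<close>
definition dform :: "('a::euclidean_space \<Rightarrow> 'a \<Rightarrow> 'a) \<Rightarrow> ('a \<Rightarrow> real) \<Rightarrow> 'a \<Rightarrow> 'a \<Rightarrow> real" where
  "dform br \<eta> U V = \<eta> (br U V)"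

definition exact_form :: "('a::euclidean_space \<Rightarrow> 'a \<Rightarrow> 'a) \<Rightarrow> ('a \<Rightarrow> 'a \<Rightarrow> real) \<Rightarrow> bool" where
  "exact_form br \<omega> \<longleftrightarrow> (\<exists>\<eta>. linear \<eta> \<and> \<omega> = dform br \<eta>)"

definition ell :: "'a::real_inner \<Rightarrow> 'a \<Rightarrow> real" where
  "ell Z X = Z \<bullet> X"

end

theory Submission
  imports Defs
begin

(* Split every vector into its v- and z-components. Brackets lie in z and only see
   v-components, so for skew F the closedness sum of <F [U,V], W> = -<[U,V], F W> splits into
   the z-component of W, where only F1 contributes (forcing F1(z) to be orthogonal to C(n)),
   and the v-components of U, V, W, where only F2 contributes (the cyclic condition on F2).
   Skew-symmetry passes from F to F1 because <F1 X, X> = <F Xv, Xv> + <F Xz, Xz>.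
   For exact forms, the Riesz representation on the subspace C(n) shows that every linear
   form agrees on brackets with l_Z for a unique Z in C(n), and <j_Z X, Y> = <Z, [X,Y]>
   identifies d l_Z with j_Z. *)

lemma lie_algebra_bilinear: "lie_algebra br \<Longrightarrow> bilinear br"
  by (simp add: lie_algebra_def)

lemma lie_algebra_antisym:
  assumes "lie_algebra br"
  shows "br Y X = - br X Y"
proof -
  have b: "bilinear br" and alt: "\<And>X. br X X = 0"
    using assms by (simp_all add: lie_algebra_def)
  have "0 = br (X + Y) (X + Y)" using alt by simp
  also have "\<dots> = br X X + br X Y + br Y X + br Y Y"
    by (simp add: bilinear_ladd[OF b] bilinear_radd[OF b])
  finally show ?thesis using alt by (simp add: eq_neg_iff_add_eq_0 add.commute)
qed

lemma two_step_nilpotent_lie_algebra: "two_step_nilpotent br \<Longrightarrow> lie_algebra br"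
  by (simp add: two_step_nilpotent_def)

lemma bracket_in_center: "two_step_nilpotent br \<Longrightarrow> br U V \<in> center br"
  by (simp add: two_step_nilpotent_def center_def)

lemma bracket_center_left: "Z \<in> center br \<Longrightarrow> br Z X = 0"
  by (simp add: center_def)

lemma bracket_center_right: "lie_algebra br \<Longrightarrow> Z \<in> center br \<Longrightarrow> br X Z = 0"
  by (metis bracket_center_left lie_algebra_antisym neg_equal_0_iff_equal)

lemma subspace_center:
  assumes "lie_algebra br"
  shows "subspace (center br)"
  using lie_algebra_bilinear[OF assms]
  by (auto simp: subspace_def center_def bilinear_lzero bilinear_ladd bilinear_lmul)

lemma subspace_vpart: "subspace (vpart br)"
  by (auto simp: subspace_def vpart_def inner_add_left)

lemma subspace_commutator: "subspace (commutator br)"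
  by (simp add: commutator_def)

lemma bracket_in_commutator: "br U V \<in> commutator br"
  by (auto simp: commutator_def intro: span_base)

lemma inner_vpart_center: "V \<in> vpart br \<Longrightarrow> Z \<in> center br \<Longrightarrow> V \<bullet> Z = 0"
  by (auto simp: vpart_def)

lemma inner_center_vpart: "V \<in> vpart br \<Longrightarrow> Z \<in> center br \<Longrightarrow> Z \<bullet> V = 0"
  by (metis inner_commute inner_vpart_center)

lemma vpart_center_eq_0: "X \<in> vpart br \<Longrightarrow> X \<in> center br \<Longrightarrow> X = 0"
  using inner_vpart_center by fastforce

lemma ex1_vpart_component:
  assumes "lie_algebra br"
  shows "\<exists>!V. V \<in> vpart br \<and> X - V \<in> center br"
proof (rule ex_ex1I)
  have sc: "span (center br) = center br" using subspace_center[OF assms] by simp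
  obtain Z V where Z: "Z \<in> span (center br)"
    and V: "\<And>W. W \<in> span (center br) \<Longrightarrow> orthogonal V W" and X: "X = Z + V"
    using orthogonal_subspace_decomp_exists by blast
  show "\<exists>V. V \<in> vpart br \<and> X - V \<in> center br"
    using Z V X sc by (intro exI[of _ V]) (auto simp: vpart_def orthogonal_def)
next
  fix V1 V2
  assume "V1 \<in> vpart br \<and> X - V1 \<in> center br" "V2 \<in> vpart br \<and> X - V2 \<in> center br"
  moreover have "V1 - V2 = (X - V2) - (X - V1)" by simp
  ultimately show "V1 = V2"
    using subspace_diff[OF subspace_vpart] subspace_diff[OF subspace_center[OF assms]]
      vpart_center_eq_0 by (metis eq_iff_diff_eq_0)
qed

lemma projv_mem:
  assumes "lie_algebra br"
  shows "projv br X \<in> vpart br" and "X - projv br X \<in> center br"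
  using theI'[OF ex1_vpart_component[OF assms]] by (simp_all add: projv_def)

lemma projv_eqI:
  assumes "lie_algebra br" "V \<in> vpart br" "X - V \<in> center br"
  shows "projv br X = V"
  using assms projv_mem ex1_vpart_component by blast

lemma projv_vpart: "lie_algebra br \<Longrightarrow> V \<in> vpart br \<Longrightarrow> projv br V = V"
  by (simp add: projv_eqI subspace_0 subspace_center)

lemma projv_center: "lie_algebra br \<Longrightarrow> Z \<in> center br \<Longrightarrow> projv br Z = 0"
  by (simp add: projv_eqI subspace_0 subspace_vpart)

lemma vpart_center_decomp:
  assumes "lie_algebra br"
  obtains V Z where "V \<in> vpart br" "Z \<in> center br" "X = V + Z"
proof
  show "projv br X \<in> vpart br" "X - projv br X \<in> center br" by (fact projv_mem[OF assms])+
qed simp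

lemma bracket_projv:
  assumes "lie_algebra br"
  shows "br X Y = br (projv br X) (projv br Y)"
proof -
  have b: "bilinear br" using lie_algebra_bilinear[OF assms] .
  have "br (X - projv br X) Y = 0" using projv_mem(2)[OF assms] bracket_center_left by blast
  moreover have "br (projv br X) (Y - projv br Y) = 0"
    using projv_mem(2)[OF assms] bracket_center_right[OF assms] by blast
  ultimately show ?thesis by (simp add: bilinear_lsub[OF b] bilinear_rsub[OF b])
qed

lemma subspace_ex1_representation:
  fixes f :: "'a::euclidean_space \<Rightarrow> real"
  assumes S: "subspace S" and f: "linear f"
  shows "\<exists>!u. u \<in> S \<and> (\<forall>W\<in>S. u \<bullet> W = f W)"
proof (rule ex_ex1I)
  obtain u z where u: "u \<in> span S" and z: "\<And>W. W \<in> span S \<Longrightarrow> orthogonal z W"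
    and uz: "adjoint f 1 = u + z"
    using orthogonal_subspace_decomp_exists by blast
  have "u \<bullet> W = f W" if "W \<in> S" for W
  proof -
    have "z \<bullet> W = 0" using z that by (simp add: orthogonal_def span_base)
    then show ?thesis
      using adjoint_works[OF f, of W 1] uz by (simp add: inner_commute inner_add_right)
  qed
  then show "\<exists>u. u \<in> S \<and> (\<forall>W\<in>S. u \<bullet> W = f W)" using u S span_eq_iff by blast
next
  fix u1 u2
  assume u1: "u1 \<in> S \<and> (\<forall>W\<in>S. u1 \<bullet> W = f W)" and u2: "u2 \<in> S \<and> (\<forall>W\<in>S. u2 \<bullet> W = f W)"
  then have "u1 - u2 \<in> S" using S by (simp add: subspace_diff)
  then have "(u1 - u2) \<bullet> (u1 - u2) = 0" using u1 u2 by (simp add: inner_diff_left)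
  then show "u1 = u2" by simp
qed

lemma jmap_char:
  assumes L: "lie_algebra br"
  shows "jmap br Z V \<in> vpart br" and "W \<in> vpart br \<Longrightarrow> jmap br Z V \<bullet> W = Z \<bullet> br V W"
proof -
  have "linear (\<lambda>W. Z \<bullet> br V W)"
    by (rule linearI)
      (simp_all add: bilinear_radd[OF lie_algebra_bilinear[OF L]]
        bilinear_rmul[OF lie_algebra_bilinear[OF L]] inner_add_right)
  from theI'[OF subspace_ex1_representation[OF subspace_vpart this]]
  show "jmap br Z V \<in> vpart br" and "W \<in> vpart br \<Longrightarrow> jmap br Z V \<bullet> W = Z \<bullet> br V W"
    by (simp_all add: jmap_def)
qed

lemma inner_jext:
  assumes L: "lie_algebra br"
  shows "jext br Z X \<bullet> Y = Z \<bullet> br X Y"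
proof -
  let ?j = "jmap br Z (projv br X)"
  have "?j \<bullet> Y = ?j \<bullet> projv br Y + ?j \<bullet> (Y - projv br Y)" by (simp add: inner_diff_right)
  also have "\<dots> = ?j \<bullet> projv br Y"
    using inner_vpart_center[OF jmap_char(1)[OF L] projv_mem(2)[OF L]] by simp
  also have "\<dots> = Z \<bullet> br X Y"
    using jmap_char(2)[OF L] projv_mem(1)[OF L] bracket_projv[OF L] by simp
  finally show ?thesis by (simp add: jext_def)
qed

lemma skew_symmetric_jext: "lie_algebra br \<Longrightarrow> skew_symmetric (jext br Z)"
  unfolding skew_symmetric_def
  by (metis inner_commute inner_jext inner_minus_right lie_algebra_antisym)

lemma jext_vpart: "lie_algebra br \<Longrightarrow> V \<in> vpart br \<Longrightarrow> jext br Z V = jmap br Z V"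
  by (simp add: jext_def projv_vpart)

lemma jext_center:
  assumes L: "lie_algebra br" and X: "X \<in> center br"
  shows "jext br Z X = 0"
proof -
  have "jext br Z X \<bullet> jext br Z X = 0"
    using bracket_center_left[OF X] by (simp add: inner_jext[OF L])
  then show ?thesis by simp
qed

lemma dform_ell_eq_jext: "lie_algebra br \<Longrightarrow> dform br (ell Z) X Y = jext br Z X \<bullet> Y"
  by (simp add: dform_def ell_def inner_jext)

lemma orthogonal_commutator:
  assumes "\<And>U V. D \<bullet> br U V = 0" and "C \<in> commutator br"
  shows "D \<bullet> C = 0"
  using orthogonal_to_span[of C "{br U V | U V. True}" D] assms
  by (auto simp: commutator_def orthogonal_def)

lemma commutator_eqI:
  assumes "\<And>U V. Z1 \<bullet> br U V = Z2 \<bullet> br U V" "Z1 \<in> commutator br" "Z2 \<in> commutator br"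
  shows "Z1 = Z2"
proof -
  have "Z1 - Z2 \<in> commutator br" using subspace_diff[OF subspace_commutator] assms(2,3) .
  moreover have "\<And>U V. (Z1 - Z2) \<bullet> br U V = 0" using assms(1) by (simp add: inner_diff_left)
  ultimately have "(Z1 - Z2) \<bullet> (Z1 - Z2) = 0" using orthogonal_commutator by blast
  then show ?thesis by simp
qed

lemma inj_on_dform_ell: "inj_on (\<lambda>Z. dform br (ell Z)) (commutator br)"
proof (rule inj_onI)
  fix Z1 Z2 assume Z: "Z1 \<in> commutator br" "Z2 \<in> commutator br"
    and eq: "dform br (ell Z1) = dform br (ell Z2)"
  have "Z1 \<bullet> br U V = Z2 \<bullet> br U V" for U V
    using fun_cong[OF fun_cong[OF eq, of U], of V] by (simp add: dform_def ell_def)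
  then show "Z1 = Z2" using Z by (rule commutator_eqI)
qed

lemma inj_on_jext: "lie_algebra br \<Longrightarrow> inj_on (jext br) (commutator br)"
  by (rule inj_onI, rule commutator_eqI) (auto simp: inner_jext[symmetric])

lemma exact_form_iff:
  fixes br :: "'a::euclidean_space \<Rightarrow> 'a \<Rightarrow> 'a"
  shows "exact_form br \<omega> \<longleftrightarrow> (\<exists>Z\<in>commutator br. \<omega> = dform br (ell Z))"
proof
  assume "exact_form br \<omega>"
  then obtain \<eta> where \<eta>: "linear \<eta>" and \<omega>: "\<omega> = dform br \<eta>" by (auto simp: exact_form_def)
  obtain Z where Z: "Z \<in> commutator br" "\<forall>W\<in>commutator br. Z \<bullet> W = \<eta> W"
    using subspace_ex1_representation[OF subspace_commutator \<eta>] by blast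
  then have "\<omega> = dform br (ell Z)"
    by (simp add: \<omega> dform_def ell_def fun_eq_iff bracket_in_commutator)
  with Z show "\<exists>Z\<in>commutator br. \<omega> = dform br (ell Z)" by blast
next
  assume "\<exists>Z\<in>commutator br. \<omega> = dform br (ell Z)"
  moreover have "linear (ell Z)" for Z :: 'a
    unfolding ell_def by (rule bounded_linear.linear[OF bounded_linear_inner_right])
  ultimately show "exact_form br \<omega>" by (auto simp: exact_form_def)
qed

lemma skew_symmetric_inner_self:
  assumes "skew_symmetric F"
  shows "F X \<bullet> X = 0"
proof -
  have "F X \<bullet> X = - (F X \<bullet> X)" using assms by (metis skew_symmetric_def inner_commute)
  then show ?thesis by simp
qed

lemma skew_symmetricI_inner_self:
  assumes F: "linear F" and diag: "\<And>X. F X \<bullet> X = 0"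
  shows "skew_symmetric F"
  unfolding skew_symmetric_def
proof (intro allI)
  fix X Y
  have "0 = F (X + Y) \<bullet> (X + Y)" using diag by simp
  also have "\<dots> = F X \<bullet> Y + F Y \<bullet> X"
    using diag by (simp add: linear_add[OF F] inner_add_left inner_add_right)
  finally show "F X \<bullet> Y = - (X \<bullet> F Y)" by (simp add: inner_commute eq_neg_iff_add_eq_0)
qed

lemma closed_form_inner_iff:
  assumes "skew_symmetric F"
  shows "closed_form br (\<lambda>X Y. F X \<bullet> Y) \<longleftrightarrow>
    (\<forall>U V W. br U V \<bullet> F W + br V W \<bullet> F U + br W U \<bullet> F V = 0)"
proof -
  have "F (br U V) \<bullet> W + F (br V W) \<bullet> U + F (br W U) \<bullet> V =
      - (br U V \<bullet> F W + br V W \<bullet> F U + br W U \<bullet> F V)" for U V W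
    using assms by (simp add: skew_symmetric_def)
  then show ?thesis by (simp only: closed_form_def neg_equal_0_iff_equal)
qed

locale skew_block_split =
  fixes br :: "'a::euclidean_space \<Rightarrow> 'a \<Rightarrow> 'a" and F F1 F2 :: "'a \<Rightarrow> 'a"
  assumes nilpotent: "two_step_nilpotent br" and skew: "skew_symmetric F"
    and linear_F1: "linear F1" and linear_F2: "linear F2" and sum: "\<forall>X. F X = F1 X + F2 X"
    and F1_vpart: "F1 ` vpart br \<subseteq> vpart br" and F1_center: "F1 ` center br \<subseteq> center br"
    and F2_vpart: "F2 ` vpart br \<subseteq> center br" and F2_center: "F2 ` center br \<subseteq> vpart br"
begin

lemma lie: "lie_algebra br"
  using nilpotent by (rule two_step_nilpotent_lie_algebra)

lemma inner_F1_self: "F1 X \<bullet> X = 0"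
proof -
  obtain V Z where V: "V \<in> vpart br" and Z: "Z \<in> center br" and X: "X = V + Z"
    using vpart_center_decomp[OF lie] .
  have "F1 V \<in> vpart br" "F1 Z \<in> center br" "F2 V \<in> center br" "F2 Z \<in> vpart br"
    using F1_vpart F1_center F2_vpart F2_center V Z by auto
  then have "F1 X \<bullet> X = F V \<bullet> V + F Z \<bullet> Z"
    using inner_vpart_center[OF _ Z] inner_center_vpart[OF V]
    by (simp add: X sum linear_add[OF linear_F1] inner_add_left inner_add_right)
  then show ?thesis by (simp add: skew_symmetric_inner_self[OF skew])
qed

lemma skew_symmetric_F1: "skew_symmetric F1"
  using linear_F1 inner_F1_self by (rule skew_symmetricI_inner_self)

lemma skew_symmetric_F2: "skew_symmetric F2"
proof (rule skew_symmetricI_inner_self[OF linear_F2])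
  fix X
  have "F2 X \<bullet> X = F X \<bullet> X - F1 X \<bullet> X" by (simp add: sum inner_add_left)
  then show "F2 X \<bullet> X = 0" by (simp add: inner_F1_self skew_symmetric_inner_self[OF skew])
qed

lemma inner_bracket_F:
  "br U V \<bullet> F W = br U V \<bullet> F1 (W - projv br W) + br U V \<bullet> F2 (projv br W)"
proof -
  let ?V = "projv br W" and ?Z = "W - projv br W"
  have "F W = F1 ?V + F1 ?Z + F2 ?V + F2 ?Z"
    using linear_add[OF linear_F1, of ?V ?Z] linear_add[OF linear_F2, of ?V ?Z] by (simp add: sum)
  moreover have "F1 ?V \<in> vpart br" "F2 ?Z \<in> vpart br"
    using F1_vpart F2_center projv_mem[OF lie] by auto
  then have "br U V \<bullet> F1 ?V = 0" "br U V \<bullet> F2 ?Z = 0"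
    using inner_center_vpart bracket_in_center[OF nilpotent] by blast+
  ultimately show ?thesis by (simp add: inner_add_right)
qed

lemma closed_form_F1_orthogonal_commutator:
  assumes closed: "closed_form br (\<lambda>X Y. F X \<bullet> Y)"
    and Z: "Z \<in> center br" and C: "C \<in> commutator br"
  shows "F1 Z \<bullet> C = 0"
proof (rule orthogonal_commutator[OF _ C])
  fix U V
  have "br U V \<bullet> F Z + br V Z \<bullet> F U + br Z U \<bullet> F V = 0"
    using closed closed_form_inner_iff[OF skew] by blast
  then have "br U V \<bullet> F Z = 0"
    using bracket_center_left[OF Z] bracket_center_right[OF lie Z] by simp
  then show "F1 Z \<bullet> br U V = 0"
    using inner_bracket_F[of U V Z] projv_center[OF lie Z] linear_0[OF linear_F2]
    by (simp add: inner_commute)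
qed

lemma closed_form_F2_cyclic:
  assumes closed: "closed_form br (\<lambda>X Y. F X \<bullet> Y)"
    and "U \<in> vpart br" "V \<in> vpart br" "W \<in> vpart br"
  shows "F2 U \<bullet> br V W + F2 V \<bullet> br W U + F2 W \<bullet> br U V = 0"
proof -
  have "br A B \<bullet> F X = F2 X \<bullet> br A B" if "X \<in> {U, V, W}" for A B X
    using assms(2-4) that inner_bracket_F[of A B X] projv_vpart[OF lie] linear_0[OF linear_F1]
    by (auto simp: inner_commute)
  moreover have "br U V \<bullet> F W + br V W \<bullet> F U + br W U \<bullet> F V = 0"
    using closed closed_form_inner_iff[OF skew] by blast
  ultimately show ?thesis by (simp add: add.commute add.left_commute)
qed

lemma closed_formI_blocks:
  assumes orth: "\<forall>Z\<in>center br. \<forall>C\<in>commutator br. F1 Z \<bullet> C = 0"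
    and cyclic: "\<forall>U\<in>vpart br. \<forall>V\<in>vpart br. \<forall>W\<in>vpart br.
      F2 U \<bullet> br V W + F2 V \<bullet> br W U + F2 W \<bullet> br U V = 0"
  shows "closed_form br (\<lambda>X Y. F X \<bullet> Y)"
proof -
  have reduce: "br U V \<bullet> F W = F2 (projv br W) \<bullet> br (projv br U) (projv br V)" for U V W
  proof -
    have "F1 (W - projv br W) \<bullet> br U V = 0"
      using orth projv_mem(2)[OF lie] bracket_in_commutator by blast
    then have "br U V \<bullet> F W = br U V \<bullet> F2 (projv br W)"
      using inner_bracket_F[of U V W] by (simp add: inner_commute)
    then show ?thesis by (metis bracket_projv[OF lie] inner_commute)
  qed
  have "br U V \<bullet> F W + br V W \<bullet> F U + br W U \<bullet> F V = 0" for U V W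
    using reduce[of U V W] reduce[of V W U] reduce[of W U V]
      cyclic[rule_format, OF projv_mem(1)[OF lie, of W] projv_mem(1)[OF lie, of U]
        projv_mem(1)[OF lie, of V]]
    by linarith
  then show ?thesis using closed_form_inner_iff[OF skew] by blast
qed

lemma closed_form_iff_blocks:
  "closed_form br (\<lambda>X Y. F X \<bullet> Y) \<longleftrightarrow>
     skew_symmetric F1 \<and> skew_symmetric F2 \<and>
     (\<forall>Z\<in>center br. \<forall>C\<in>commutator br. F1 Z \<bullet> C = 0) \<and>
     (\<forall>U\<in>vpart br. \<forall>V\<in>vpart br. \<forall>W\<in>vpart br.
        F2 U \<bullet> br V W + F2 V \<bullet> br W U + F2 W \<bullet> br U V = 0)"
  using skew_symmetric_F1 skew_symmetric_F2 closed_form_F1_orthogonal_commutator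
    closed_form_F2_cyclic closed_formI_blocks by blast

end

theorem mainTheorem3:
  fixes br :: "'a::euclidean_space \<Rightarrow> 'a \<Rightarrow> 'a"
  assumes "two_step_nilpotent br"
  shows
   "(\<forall>F F1 F2. linear F \<and> skew_symmetric F \<and> linear F1 \<and> linear F2 \<and>
        (\<forall>X. F X = F1 X + F2 X) \<and>
        F1 ` vpart br \<subseteq> vpart br \<and> F1 ` center br \<subseteq> center br \<and>
        F2 ` vpart br \<subseteq> center br \<and> F2 ` center br \<subseteq> vpart br \<longrightarrow>
        (closed_form br (\<lambda>X Y. F X \<bullet> Y) \<longleftrightarrow>
           skew_symmetric F1 \<and> skew_symmetric F2 \<and>
           (\<forall>Z\<in>center br. \<forall>C\<in>commutator br. F1 Z \<bullet> C = 0) \<and>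
           (\<forall>U\<in>vpart br. \<forall>V\<in>vpart br. \<forall>W\<in>vpart br.
              F2 U \<bullet> br V W + F2 V \<bullet> br W U + F2 W \<bullet> br U V = 0)))
    \<and> (\<forall>\<omega>. exact_form br \<omega> \<longleftrightarrow> (\<exists>Z\<in>commutator br. \<omega> = dform br (ell Z)))
    \<and> inj_on (\<lambda>Z. dform br (ell Z)) (commutator br)
    \<and> (\<forall>Z\<in>commutator br.
          skew_symmetric (jext br Z) \<and>
          (\<forall>V\<in>vpart br. jext br Z V = jmap br Z V) \<and>
          (\<forall>X\<in>center br. jext br Z X = 0) \<and>
          (\<forall>X Y. dform br (ell Z) X Y = jext br Z X \<bullet> Y))
    \<and> inj_on (jext br) (commutator br)"
proof -
  have L: "lie_algebra br" using assms by (rule two_step_nilpotent_lie_algebra)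
  show ?thesis
  proof (intro conjI allI impI ballI, goal_cases)
    case (1 F F1 F2)
    then have "skew_block_split br F F1 F2" using assms by (simp add: skew_block_split_def)
    then show ?case by (rule skew_block_split.closed_form_iff_blocks)
  qed (simp_all add: exact_form_iff inj_on_dform_ell skew_symmetric_jext[OF L] jext_vpart[OF L]
      jext_center[OF L] dform_ell_eq_jext[OF L] inj_on_jext[OF L])
qed

end
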